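(* Let $M=(E,\mathcal{I})$ be a matroid with rank function $r$ and let $L\in\mathbb{R}^{E\times E}$ be a symmetric positive-definite loss matrix for the row player (i.e. $L^T=L$ and $x^TLx>0$ for all $x\ne0$). If the matroid game with loss matrix $L$ has a symmetric Nash equilibrium, then it is unique.
   Context: $B(M)=\{x\ge0: x(S)\le r(S)\ \forall S\subseteq E,\ x(E)=r(E)\}$. In the matroid game, the row player chooses $x\in B(M)$ minimizing $x^TLy$ and the column player chooses $y\in B(M)$ maximizing it; $(x,x)$ with $x\in B(M)$ is a symmetric Nash equilibrium if $x^TLz\le x^TLx\le z^TLx$ for all $z\in B(M)$. *)

theory Defs
  imports Complex_Main
begin

definition matroid :: "'a set \<Rightarrow> 'a set set \<Rightarrow> bool" where
  "matroid E I \<longleftrightarrow> finite E \<and> I \<subseteq> Pow E \<and> {} \<in> I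
     \<and> (\<forall>X Y. X \<in> I \<and> Y \<subseteq> X \<longrightarrow> Y \<in> I)
     \<and> (\<forall>X Y. X \<in> I \<and> Y \<in> I \<and> card X < card Y \<longrightarrow> (\<exists>e\<in>Y - X. insert e X \<in> I))"

definition matroid_rank :: "'a set set \<Rightarrow> 'a set \<Rightarrow> nat" where
  "matroid_rank I S = Max {card X | X. X \<subseteq> S \<and> X \<in> I}"

text \<open>Vectors in R^E are functions 'a \<Rightarrow> real vanishing outside E.\<close>
definition base_polytope :: "'a set \<Rightarrow> 'a set set \<Rightarrow> ('a \<Rightarrow> real) set" where
  "base_polytope E I = {x. (\<forall>e. e \<notin> E \<longrightarrow> x e = 0) \<and> (\<forall>e\<in>E. 0 \<le> x e)
     \<and> (\<forall>S\<subseteq>E. (\<Sum>e\<in>S. x e) \<le> real (matroid_rank I S))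
     \<and> (\<Sum>e\<in>E. x e) = real (matroid_rank I E)}"

definition bilin :: "'a set \<Rightarrow> ('a \<Rightarrow> real) \<Rightarrow> ('a \<Rightarrow> 'a \<Rightarrow> real) \<Rightarrow> ('a \<Rightarrow> real) \<Rightarrow> real" where
  "bilin E x L y = (\<Sum>i\<in>E. \<Sum>j\<in>E. x i * L i j * y j)"

definition sym_matrix :: "'a set \<Rightarrow> ('a \<Rightarrow> 'a \<Rightarrow> real) \<Rightarrow> bool" where
  "sym_matrix E L \<longleftrightarrow> (\<forall>i\<in>E. \<forall>j\<in>E. L i j = L j i)"

definition pos_def_matrix :: "'a set \<Rightarrow> ('a \<Rightarrow> 'a \<Rightarrow> real) \<Rightarrow> bool" where
  "pos_def_matrix E L \<longleftrightarrow> (\<forall>x. (\<forall>e. e \<notin> E \<longrightarrow> x e = 0) \<and> x \<noteq> (\<lambda>_. 0) \<longrightarrow> bilin E x L x > 0)"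

definition symmetric_NE :: "'a set \<Rightarrow> 'a set set \<Rightarrow> ('a \<Rightarrow> 'a \<Rightarrow> real) \<Rightarrow> ('a \<Rightarrow> real) \<Rightarrow> bool" where
  "symmetric_NE E I L x \<longleftrightarrow> x \<in> base_polytope E I \<and>
     (\<forall>z\<in>base_polytope E I. bilin E x L z \<le> bilin E x L x \<and> bilin E x L x \<le> bilin E z L x)"

end

theory Submission
  imports Defs
begin

(* Two symmetric equilibria x, y give the cycle
   x'Ly <= x'Lx <= y'Lx <= y'Ly <= x'Ly, so all four values coincide and
   (x - y)'L(x - y) = 0; positive definiteness then forces x = y. *)

lemma bilin_diff_diff:
  "bilin E (\<lambda>e. x e - y e) L (\<lambda>e. x e - y e) =
   bilin E x L x - bilin E x L y - bilin E y L x + bilin E y L y"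
proof -
  have "(x i - y i) * L i j * (x j - y j) =
        x i * L i j * x j - x i * L i j * y j - y i * L i j * x j + y i * L i j * y j"
    for i j
    by (simp add: algebra_simps)
  then show ?thesis
    unfolding bilin_def by (simp only: sum.distrib sum_subtractf)
qed

lemma symmetric_NE_vanishes_outside:
  "symmetric_NE E I L x \<Longrightarrow> e \<notin> E \<Longrightarrow> x e = 0"
  unfolding symmetric_NE_def base_polytope_def by blast

lemma pos_def_matrix_quadratic_eq_0:
  assumes "pos_def_matrix E L" "\<And>e. e \<notin> E \<Longrightarrow> v e = 0" "bilin E v L v = 0"
  shows "v = (\<lambda>_. 0)"
proof (rule ccontr)
  assume "v \<noteq> (\<lambda>_. 0)"
  with assms(1,2) have "bilin E v L v > 0"
    unfolding pos_def_matrix_def by blast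
  with assms(3) show False by simp
qed

lemma symmetric_NE_bilin_eq:
  assumes "symmetric_NE E I L x" "symmetric_NE E I L y"
  shows "bilin E x L y = bilin E x L x" "bilin E y L x = bilin E x L x"
    "bilin E y L y = bilin E x L x"
proof -
  have "x \<in> base_polytope E I" "y \<in> base_polytope E I"
    using assms unfolding symmetric_NE_def by auto
  then have "bilin E x L y \<le> bilin E x L x" "bilin E x L x \<le> bilin E y L x"
    "bilin E y L x \<le> bilin E y L y" "bilin E y L y \<le> bilin E x L y"
    using assms unfolding symmetric_NE_def by auto
  then show "bilin E x L y = bilin E x L x" "bilin E y L x = bilin E x L x"
    "bilin E y L y = bilin E x L x"
    by linarith+
qed

theorem theorem12:
  fixes E :: "'a set" and I :: "'a set set" and L :: "'a \<Rightarrow> 'a \<Rightarrow> real"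
  assumes "matroid E I"
    and "sym_matrix E L"
    and "pos_def_matrix E L"
    and "symmetric_NE E I L x"
    and "symmetric_NE E I L y"
  shows "x = y"
proof -
  have "x e - y e = 0" if "e \<notin> E" for e
    using symmetric_NE_vanishes_outside[OF assms(4) that]
      symmetric_NE_vanishes_outside[OF assms(5) that] by simp
  moreover have "bilin E (\<lambda>e. x e - y e) L (\<lambda>e. x e - y e) = 0"
    using symmetric_NE_bilin_eq[OF assms(4,5)] by (simp only: bilin_diff_diff)
  ultimately have "(\<lambda>e. x e - y e) = (\<lambda>_. 0)"
    by (rule pos_def_matrix_quadratic_eq_0[OF assms(3)])
  then show "x = y"
    by (simp add: fun_eq_iff)
qed

end
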